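(* For every integer $n\ge1$, \[ \sum_{m=1}^{\infty}\frac{(-1)^{m+1}\,2n}{(m+1)(m+2n+1)}H_m=2\ln2\sum_{k=0}^{n-1}\frac{1}{2k+1}-\sum_{j=1}^{2n}\frac1j\sum_{k=1}^{j}\frac{(-1)^{k-1}}{k}. \]
   Context: $H_m=\sum_{j=1}^m 1/j$ is the $m$-th harmonic number. *)

theory Defs
  imports "HOL-Analysis.Analysis"
begin

end

theory Submission
  imports Defs "HOL-Real_Asymp.Real_Asymp"
begin

(* Write A_j = \<Sum>k=1..j (-1)^(k-1)/k for the alternating harmonic numbers and
   P_N(a) = \<Sum>m=1..N (-1)^(m+1) H_m/(m+a).  By partial fractions
   2n/((m+1)(m+2n+1)) = 1/(m+1) - 1/(m+2n+1), so the N-th partial sum of the series is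
   P_N(1) - P_N(2n+1), which telescopes into \<Sum>j=1..2n (-1)^(j+1) (P_N(j) + P_N(j+1)).
   Using H_(m+1) = H_m + 1/(m+1), each bracket equals a harmonic-free sum
   \<Sum>m=1..N+1 (-1)^(m+1)/(m(m+j)) plus a boundary term of size H_(N+1)/(N+1+j) -> 0;
   a second partial-fraction step expresses that sum through A_(N+1), A_(N+1+j) and A_j.
   Since A_M -> ln 2, the bracket tends to (ln 2 - (-1)^j (ln 2 - A_j))/j.  Summing over j,
   the ln 2 coefficients add up to 2 \<Sum>k<n 1/(2k+1) and the A_j terms give the second sum. *)

lemma partial_fraction:
  fixes s x y :: "'a :: field"
  assumes "x \<noteq> 0" "y \<noteq> 0" "x \<noteq> y"
  shows "s / (x * y) = (s / x - s / y) / (y - x)"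
  using assms by (simp add: field_simps)

definition alt_harm :: "nat \<Rightarrow> real" where
  "alt_harm M = (\<Sum>k=1..M. (-1) ^ (k - 1) / real k)"

lemma alt_harm_tendsto: "alt_harm \<longlonglongrightarrow> ln 2"
proof -
  have "alt_harm M = (\<Sum>k<M. (-1) ^ k / real (Suc k))" for M
    unfolding alt_harm_def sum_bounds_lt_plus1[symmetric] by simp
  then have "alt_harm = (\<lambda>M. \<Sum>k<M. (-1) ^ k / real (Suc k))"
    by (rule ext)
  then show ?thesis
    using alternating_harmonic_series_sums by (simp only: sums_def)
qed

lemma alt_sum_shifted:
  "(\<Sum>m=1..M. (-1) ^ (m + 1) / real (m + j)) = (-1) ^ j * (alt_harm (M + j) - alt_harm j)"
proof (induction M)
  case 0
  then show ?case by simp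
next
  case (Suc M)
  have sign: "(-1::real) ^ j * (-1) ^ (M + j) = (-1) ^ M"
    by (simp add: power_add flip: mult.assoc power_mult_distrib)
  have "alt_harm (Suc M + j) = alt_harm (M + j) + (-1) ^ (M + j) / real (Suc M + j)"
    by (simp add: alt_harm_def)
  with Suc sign show ?case by (simp add: algebra_simps)
qed

lemma alt_sum_partial_fractions:
  assumes "j > 0"
  shows "(\<Sum>m=1..M. (-1) ^ (m + 1) / (real m * real (m + j)))
       = (alt_harm M - (-1) ^ j * (alt_harm (M + j) - alt_harm j)) / real j"
proof -
  have "(\<Sum>m=1..M. (-1) ^ (m + 1) / (real m * real (m + j)))
      = (\<Sum>m=1..M. ((-1) ^ (m - 1) / real m - (-1) ^ (m + 1) / real (m + j)) / real j)"
  proof (rule sum.cong)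
    fix m assume "m \<in> {1..M}"
    then have "(-1::real) ^ (m - 1) = (-1) ^ (m + 1)"
      by (cases m) auto
    then show "(-1) ^ (m + 1) / (real m * real (m + j))
        = ((-1) ^ (m - 1) / real m - (-1) ^ (m + 1) / real (m + j)) / real j"
      using partial_fraction[of "real m" "real (m + j)" "(-1) ^ (m + 1)"] \<open>m \<in> {1..M}\<close> \<open>j > 0\<close>
      by simp
  qed simp
  also have "\<dots> = (alt_harm M - (\<Sum>m=1..M. (-1) ^ (m + 1) / real (m + j))) / real j"
    by (simp only: alt_harm_def sum_divide_distrib[symmetric] sum_subtractf)
  finally show ?thesis
    by (simp only: alt_sum_shifted)
qed

definition harm_alt_sum :: "nat \<Rightarrow> nat \<Rightarrow> real" where
  "harm_alt_sum N a = (\<Sum>m=1..N. (-1) ^ (m + 1) * harm m / real (m + a))"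

(* Adjacent shifts combine into a harmonic-free sum plus a boundary term:
   this is the recursion H_(m+1) = H_m + 1/(m+1) summed by parts. *)
lemma harm_alt_sum_adjacent:
  "harm_alt_sum N j + harm_alt_sum N (Suc j)
   = (\<Sum>m=1..N+1. (-1) ^ (m + 1) / (real m * real (m + j)))
     + (-1) ^ (N + 1) * harm (N + 1) / real (N + 1 + j)"
proof (induction N)
  case 0
  then show ?case by (simp add: harm_alt_sum_def harm_def)
next
  case (Suc N)
  let ?s = "(-1::real) ^ N" and ?H = "harm (N + 1) :: real"
  let ?S = "\<lambda>M. \<Sum>m=1..M. (-1::real) ^ (m + 1) / (real m * real (m + j))"
  have harm_step: "harm (N + 2) = ?H + 1 / real (N + 2)"
    using harm_Suc[of "Suc N", where 'a=real] by (simp add: divide_inverse)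
  have S_step: "?S (N + 2) = ?S (N + 1) - ?s / (real (N + 2) * real (N + 2 + j))"
    by (simp add: power_add)
  have "harm_alt_sum (Suc N) j + harm_alt_sum (Suc N) (Suc j)
      = harm_alt_sum N j + harm_alt_sum N (Suc j) + ?s * ?H / real (N + 1 + j) + ?s * ?H / real (N + 2 + j)"
    by (simp add: harm_alt_sum_def power_add)
  also have "\<dots> = ?S (N + 1) + ?s * ?H / real (N + 2 + j)"
    using Suc by (simp add: power_add)
  also have "\<dots> = ?S (N + 2) + ?s * (?H + 1 / real (N + 2)) / real (N + 2 + j)"
    by (simp add: S_step distrib_left add_divide_distrib)
  finally show ?case
    using harm_step by simp
qed

(* H_N grows only logarithmically, so it is negligible against N + j. *)
lemma harm_over_linear_tendsto: "(\<lambda>N. harm N / real (N + j)) \<longlonglongrightarrow> (0::real)"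
proof -
  have "(\<lambda>N. (harm N - ln (real N)) * (1 / real (N + j)) + ln (real N) / real (N + j))
        \<longlonglongrightarrow> euler_mascheroni * 0 + 0"
    by (intro tendsto_intros euler_mascheroni_LIMSEQ) real_asymp+
  moreover have "(harm N - ln (real N)) * (1 / real (N + j)) + ln (real N) / real (N + j)
      = harm N / real (N + j)" for N
    by (simp only: times_divide_eq_right mult_1_right add_divide_distrib[symmetric] diff_add_cancel)
  ultimately show ?thesis
    by simp
qed

lemma harm_alt_sum_adjacent_tendsto:
  assumes "j > 0"
  shows "(\<lambda>N. harm_alt_sum N j + harm_alt_sum N (Suc j))
         \<longlonglongrightarrow> (ln 2 - (-1) ^ j * (ln 2 - alt_harm j)) / real j"
proof -
  have closed_form: "harm_alt_sum N j + harm_alt_sum N (Suc j)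
      = (alt_harm (N + 1) - (-1) ^ j * (alt_harm (N + 1 + j) - alt_harm j)) / real j
        + (-1) ^ (N + 1) * harm (N + 1) / real (N + 1 + j)" for N
    by (simp only: harm_alt_sum_adjacent alt_sum_partial_fractions[OF assms])
  have A1: "(\<lambda>N. alt_harm (N + 1)) \<longlonglongrightarrow> ln 2"
    using LIMSEQ_ignore_initial_segment[OF alt_harm_tendsto] .
  have A2: "(\<lambda>N. alt_harm (N + 1 + j)) \<longlonglongrightarrow> ln 2"
    using LIMSEQ_ignore_initial_segment[OF alt_harm_tendsto, of "1 + j"] by (simp only: add.assoc)
  have harm_lim: "(\<lambda>N. harm (N + 1) / real (N + 1 + j)) \<longlonglongrightarrow> (0::real)"
    using LIMSEQ_ignore_initial_segment[OF harm_over_linear_tendsto, of 1] by (simp only: add.assoc)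
  have boundary: "(\<lambda>N. (-1) ^ (N + 1) * harm (N + 1) / real (N + 1 + j)) \<longlonglongrightarrow> (0::real)"
  proof (rule tendsto_norm_zero_cancel)
    have "norm ((-1) ^ (N + 1) * harm (N + 1) / real (N + 1 + j) :: real)
        = harm (N + 1) / real (N + 1 + j)" for N
      by (simp add: abs_mult)
    with harm_lim show "(\<lambda>N. norm ((-1) ^ (N + 1) * harm (N + 1) / real (N + 1 + j) :: real)) \<longlonglongrightarrow> 0"
      by (simp only:)
  qed
  have "(\<lambda>N. (alt_harm (N + 1) - (-1) ^ j * (alt_harm (N + 1 + j) - alt_harm j)) / real j
             + (-1) ^ (N + 1) * harm (N + 1) / real (N + 1 + j))
        \<longlonglongrightarrow> (ln 2 - (-1) ^ j * (ln 2 - alt_harm j)) / real j + 0"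
    using \<open>j > 0\<close>
    by (intro tendsto_add[OF tendsto_divide[OF tendsto_diff[OF A1 tendsto_mult[OF tendsto_const
        tendsto_diff[OF A2 tendsto_const]]] tendsto_const] boundary]) simp
  then show ?thesis
    by (simp only: closed_form add_0_right)
qed

lemma telescope_alternating:
  fixes P :: "nat \<Rightarrow> 'a :: comm_ring_1"
  shows "P 1 - (-1) ^ k * P (k + 1) = (\<Sum>j=1..k. (-1) ^ (j + 1) * (P j + P (Suc j)))"
  by (induction k) (simp_all add: algebra_simps)

(* The ln 2 coefficients: 1/j is counted twice for odd j and cancels for even j. *)
lemma odd_reciprocal_sum:
  "(\<Sum>j=1..2*n. (1 - (-1) ^ j) / real j) = 2 * (\<Sum>k<n. 1 / (2 * real k + 1))"
proof (induction n)
  case 0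
  then show ?case by simp
next
  case (Suc n)
  have "{1..2 * Suc n} = insert (2*n+2) (insert (2*n+1) {1..2*n})"
    by auto
  then show ?case
    using Suc by (simp add: field_simps)
qed

lemma partial_sum_telescoped:
  "(\<Sum>i<N. let m = Suc i in
      (-1) ^ (m + 1) * (2 * real n) / (real (m + 1) * real (m + 2 * n + 1)) * harm m)
   = (\<Sum>j=1..2*n. (-1) ^ (j + 1) * (harm_alt_sum N j + harm_alt_sum N (Suc j)))"
proof -
  have "(\<Sum>i<N. let m = Suc i in
          (-1) ^ (m + 1) * (2 * real n) / (real (m + 1) * real (m + 2 * n + 1)) * harm m)
      = (\<Sum>m=1..N. (-1) ^ (m + 1) * (2 * real n) / (real (m + 1) * real (m + 2 * n + 1)) * harm m)"
    unfolding Let_def by (rule sum_bounds_lt_plus1)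
  also have "\<dots> = (\<Sum>m=1..N. (-1) ^ (m + 1) * harm m / real (m + 1)
                            - (-1) ^ (m + 1) * harm m / real (m + (2 * n + 1)))"
    by (rule sum.cong) (auto simp: field_simps)
  also have "\<dots> = harm_alt_sum N 1 - (-1) ^ (2 * n) * harm_alt_sum N (2 * n + 1)"
    unfolding harm_alt_sum_def sum_subtractf by simp
  also have "\<dots> = (\<Sum>j=1..2*n. (-1) ^ (j + 1) * (harm_alt_sum N j + harm_alt_sum N (Suc j)))"
    by (rule telescope_alternating)
  finally show ?thesis .
qed

lemma limit_sum_closed_form:
  "(\<Sum>j=1..2*n. (-1) ^ (j + 1) * ((ln 2 - (-1) ^ j * (ln 2 - alt_harm j)) / real j))
   = 2 * ln 2 * (\<Sum>k<n. 1 / (2 * real k + 1)) - (\<Sum>j=1..2*n. (1 / real j) * alt_harm j)"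
proof -
  have summand: "(-1) ^ (j + 1) * ((ln 2 - (-1) ^ j * (ln 2 - alt_harm j)) / real j)
      = ln 2 * ((1 - (-1) ^ j) / real j) - (1 / real j) * alt_harm j" for j
  proof -
    have "(-1::real) ^ j * (-1) ^ j = 1"
      by (simp flip: power_mult_distrib)
    then show ?thesis
      by (simp add: algebra_simps diff_divide_distrib)
  qed
  show ?thesis
    unfolding summand sum_subtractf sum_distrib_left[symmetric] odd_reciprocal_sum by simp
qed

theorem proposition7:
  fixes n :: nat
  assumes "n \<ge> 1"
  shows "(\<lambda>i. let m = Suc i in
            (-1) ^ (m + 1) * (2 * real n) / (real (m + 1) * real (m + 2 * n + 1)) * harm m)
         sums (2 * ln 2 * (\<Sum>k=0..n-1. 1 / (2 * real k + 1))
               - (\<Sum>j=1..2*n. (1 / real j) * (\<Sum>k=1..j. (-1) ^ (k - 1) / real k)))"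
proof -
  have "(\<lambda>N. \<Sum>j=1..2*n. (-1) ^ (j + 1) * (harm_alt_sum N j + harm_alt_sum N (Suc j)))
        \<longlonglongrightarrow> 2 * ln 2 * (\<Sum>k<n. 1 / (2 * real k + 1)) - (\<Sum>j=1..2*n. (1 / real j) * alt_harm j)"
    unfolding limit_sum_closed_form[symmetric]
    by (intro tendsto_sum tendsto_mult tendsto_const harm_alt_sum_adjacent_tendsto) auto
  moreover have "{0..n-1} = {..<n}"
    using assms by auto
  ultimately show ?thesis
    unfolding sums_def partial_sum_telescoped alt_harm_def[symmetric] by (simp only:)
qed

end
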